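(* If $\psi \in \mathcal{D}^1$, then for each $i=1,\dots,I$ and every $u\in\mathbb{R}_+$, \[i\, \psi_i'(u)=\sum_{j=1}^{I}M_{ij}^*(\psi'(u))\,v^{\mathrm{eff}}_j(\psi'(u))\, \psi_j'(u),\] where $\psi'(u)=(\psi_1'(u),\dots,\psi_I'(u))$.
   Context: Fix $I\in\mathbb{N}$. $\mathcal{C}=\{f\in C(\mathbb{R}_+,\mathbb{R}_+):f(0)=0,f\text{ non-decreasing}\}$, $\mathcal{C}^\uparrow=\{f\in\mathcal{C}:f\text{ strictly increasing},\lim_{u\to\infty}f(u)=\infty\}$, $\mathcal{C}^1=\{f\in\mathcal{C}:f^{\mathbb{R}}\in C^1(\mathbb{R},\mathbb{R})\}$ where $f^{\mathbb{R}}$ extends $f$ by $0$ on $(-\infty,0)$. For $\psi\in\mathcal{C}^I$, $\phi_i(u)=u-\sum_j2(i\wedge j)\psi_j(u)$; $\mathcal{D}=\{\psi\in\mathcal{C}^I:\phi_I\in\mathcal{C}^\uparrow,\sum_ii\sup_{u_1\ne u_2}\frac{\psi_i(u_1)-\psi_i(u_2)}{\phi_i(u_1)-\phi_i(u_2)}<\frac12\}$ and $\mathcal{D}^1=\mathcal{D}\cap(\mathcal{C}^1)^I$. With $\kappa_{ij}=2(i\wedge j)$, for $\rho\in\mathbb{R}_+^I$ let $M(\rho)$ have $M_{ii}=1-\sum_{j\neq i}\kappa_{ij}\rho_j$, $M_{ij}=\kappa_{ij}\rho_j$ ($i\neq j$), and $M^*(\rho)$ have $M^*_{ii}=1-\sum_{j\ne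 i}\kappa_{ij}\rho_j$, $M^*_{ij}=\kappa_{ij}\rho_i$ ($i\neq j$). When $\sum_i2i\rho_i<1$, $M(\rho)$ is invertible and $v^{\mathrm{eff}}(\rho):=M(\rho)^{-1}(1,2,\dots,I)^T$ (for $\psi\in\mathcal{D}^1$ this condition holds for $\rho=\psi'(u)$). *)

theory Defs
  imports "HOL-Analysis.Analysis"
begin

text \<open>Functions on R_+ are represented as real \<Rightarrow> real; only values on {0..} matter.
  Vectors/matrices indexed by {1..I} are nat \<Rightarrow> real / nat \<Rightarrow> nat \<Rightarrow> real.\<close>

definition classC :: "(real \<Rightarrow> real) \<Rightarrow> bool" where
  "classC f \<longleftrightarrow> continuous_on {0..} f \<and> f 0 = 0 \<and> (\<forall>u\<ge>0. f u \<ge> 0) \<and> mono_on {0..} f"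

definition classCup :: "(real \<Rightarrow> real) \<Rightarrow> bool" where
  "classCup f \<longleftrightarrow> classC f \<and> strict_mono_on {0..} f \<and> filterlim f at_top at_top"

definition extR :: "(real \<Rightarrow> real) \<Rightarrow> real \<Rightarrow> real" where
  "extR f x = (if x < 0 then 0 else f x)"

definition classC1 :: "(real \<Rightarrow> real) \<Rightarrow> bool" where
  "classC1 f \<longleftrightarrow> classC f \<and>
     (\<exists>g. continuous_on UNIV g \<and> (\<forall>x. (extR f has_real_derivative g x) (at x)))"

text \<open>psi'(u): derivative of the extension f^R at u (one-sided at u = 0).\<close>
definition dpsi :: "(nat \<Rightarrow> real \<Rightarrow> real) \<Rightarrow> nat \<Rightarrow> real \<Rightarrow> real" where
  "dpsi psi j u = deriv (extR (psi j)) u"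

definition kappa :: "nat \<Rightarrow> nat \<Rightarrow> real" where
  "kappa i j = 2 * real (min i j)"

definition phi :: "nat \<Rightarrow> (nat \<Rightarrow> real \<Rightarrow> real) \<Rightarrow> nat \<Rightarrow> real \<Rightarrow> real" where
  "phi I psi i u = u - (\<Sum>j\<in>{1..I}. kappa i j * psi j u)"

definition classD :: "nat \<Rightarrow> (nat \<Rightarrow> real \<Rightarrow> real) set" where
  "classD I = {psi. (\<forall>i\<in>{1..I}. classC (psi i)) \<and> classCup (phi I psi I) \<and>
      (\<Sum>i\<in>{1..I}. ereal (real i) *
         (SUP p\<in>{(a,b). a \<ge> (0::real) \<and> b \<ge> 0 \<and> a \<noteq> b}.
            ereal ((psi i (fst p) - psi i (snd p)) / (phi I psi i (fst p) - phi I psi i (snd p)))))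
        < ereal (1/2)}"

definition classD1 :: "nat \<Rightarrow> (nat \<Rightarrow> real \<Rightarrow> real) set" where
  "classD1 I = {psi \<in> classD I. \<forall>i\<in>{1..I}. classC1 (psi i)}"

definition Mmat :: "nat \<Rightarrow> (nat \<Rightarrow> real) \<Rightarrow> nat \<Rightarrow> nat \<Rightarrow> real" where
  "Mmat I rho i j = (if i = j then 1 - (\<Sum>k\<in>{1..I}-{i}. kappa i k * rho k)
                     else kappa i j * rho j)"

definition Mstar :: "nat \<Rightarrow> (nat \<Rightarrow> real) \<Rightarrow> nat \<Rightarrow> nat \<Rightarrow> real" where
  "Mstar I rho i j = (if i = j then 1 - (\<Sum>k\<in>{1..I}-{i}. kappa i k * rho k)
                      else kappa i j * rho i)"

text \<open>v_eff(rho) = M(rho)^{-1} (1,...,I)^T: the unique solution v (supported on {1..I})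
  of M(rho) v = (1,...,I)^T.\<close>
definition veff :: "nat \<Rightarrow> (nat \<Rightarrow> real) \<Rightarrow> nat \<Rightarrow> real" where
  "veff I rho = (THE v. (\<forall>i\<in>{1..I}. (\<Sum>j\<in>{1..I}. Mmat I rho i j * v j) = real i)
                       \<and> (\<forall>j. j \<notin> {1..I} \<longrightarrow> v j = 0))"

end

theory Submission
  imports Defs "Jordan_Normal_Form.Determinant"
begin

unbundle no vec_syntax

text \<open>Write \<open>\<rho> = \<psi>'(u)\<close> and \<open>c\<^sub>k = 1 - \<Sum>\<^sub>j \<kappa>\<^sub>k\<^sub>j \<rho>\<^sub>j\<close>, the slope of \<open>\<phi>\<^sub>k\<close> at \<open>u\<close>.
  Since \<open>M\<^sup>*\<^sub>i\<^sub>j \<rho>\<^sub>j = \<rho>\<^sub>i M\<^sub>i\<^sub>j\<close>, the claimed identity is \<open>i \<rho>\<^sub>i = \<rho>\<^sub>i (M v\<^sup>e\<^sup>f\<^sup>f)\<^sub>i\<close>, so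
  everything reduces to the nonsingularity of \<open>M(\<rho>)\<close>, which makes \<open>v\<^sup>e\<^sup>f\<^sup>f\<close> a genuine solution
  of \<open>M v = (1,\<dots>,I)\<close>.
  The ratio \<open>\<rho>\<^sub>k / c\<^sub>k\<close> is the derivative of \<open>\<psi>\<^sub>k\<close> with respect to \<open>\<phi>\<^sub>k\<close>, hence bounded by the
  Lipschitz constant \<open>L\<^sub>k\<close> of \<open>\<psi>\<^sub>k\<close> relative to \<open>\<phi>\<^sub>k\<close>, and \<open>\<Sum>\<^sub>k k L\<^sub>k < 1/2\<close> gives
  \<open>\<Sum>\<^sub>k k \<rho>\<^sub>k / c\<^sub>k < 1/2\<close>. For a kernel vector \<open>v\<close> of \<open>M\<close>, \<open>w = \<rho> v\<close> then satisfies
  \<open>|w\<^sub>i| \<le> 2 i (\<rho>\<^sub>i / c\<^sub>i) \<Sum>\<^sub>j |w\<^sub>j|\<close>, which forces \<open>w = 0\<close> and then \<open>v = 0\<close>.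
  That all \<open>c\<^sub>k\<close> are positive is the delicate point: \<open>c\<^sub>k \<ge> c\<^sub>I = c\<^sub>j\<close> for the largest \<open>j\<close>
  with \<open>\<rho>\<^sub>j > 0\<close>, and \<open>c\<^sub>j = 0\<close> would make \<open>L\<^sub>j\<close> infinite.\<close>

lemma mult_mat_vec_index_shift:
  assumes "i < n" "x \<in> carrier_vec n"
  shows "(mat n n (\<lambda>(i, j). A (Suc i) (Suc j)) *\<^sub>v x) $ i =
    (\<Sum>j\<in>{1..n}. A (Suc i) j * x $ (j - 1))"
  using assms unfolding One_nat_def sum.atLeast1_atMost_eq
  by (simp add: scalar_prod_def atLeast0LessThan)

lemma solvable_if_kernel_trivial:
  fixes A :: "nat \<Rightarrow> nat \<Rightarrow> real" and b :: "nat \<Rightarrow> real"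
  assumes kernel: "\<And>v. \<forall>i\<in>{1..n}. (\<Sum>j\<in>{1..n}. A i j * v j) = 0 \<Longrightarrow> \<forall>j\<in>{1..n}. v j = 0"
  shows "\<exists>v. \<forall>i\<in>{1..n}. (\<Sum>j\<in>{1..n}. A i j * v j) = b i"
proof -
  define M where "M = mat n n (\<lambda>(i, j). A (Suc i) (Suc j))"
  have M: "M \<in> carrier_mat n n"
    unfolding M_def by simp
  note mult_vec = mult_mat_vec_index_shift[of _ n _ A, folded M_def]
  have "det M \<noteq> 0"
  proof
    assume "det M = 0"
    then obtain x where x: "x \<in> carrier_vec n" "x \<noteq> 0\<^sub>v n" "M *\<^sub>v x = 0\<^sub>v n"
      using det_0_iff_vec_prod_zero_field[OF M] by auto
    have "\<forall>i\<in>{1..n}. (\<Sum>j\<in>{1..n}. A i j * x $ (j - 1)) = 0"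
    proof
      fix i assume "i \<in> {1..n}"
      then have i': "i - 1 < n" "Suc (i - 1) = i"
        by auto
      then have "(M *\<^sub>v x) $ (i - 1) = 0"
        using x(3) by simp
      with i' show "(\<Sum>j\<in>{1..n}. A i j * x $ (j - 1)) = 0"
        using mult_vec[of "i - 1" x] x(1) by simp
    qed
    then have "\<forall>j\<in>{1..n}. x $ (j - 1) = 0"
      by (rule kernel)
    then have "x = 0\<^sub>v n"
      using x(1) by (intro eq_vecI) (auto elim!: ballE[where x = "Suc _"])
    with x(2) show False ..
  qed
  from det_non_zero_imp_unit[OF M this, unfolded Units_def, of "()"]
  obtain B where B: "B \<in> carrier_mat n n" and MB: "M * B = 1\<^sub>m n"
    by (auto simp: ring_mat_def)
  define y where "y = vec n (\<lambda>i. b (Suc i))"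
  define x where "x = B *\<^sub>v y"
  have x: "x \<in> carrier_vec n"
    unfolding x_def y_def using B by simp
  have "M *\<^sub>v x = y"
    using B M by (simp add: x_def y_def assoc_mult_mat_vec[symmetric] MB)
  show ?thesis
  proof (intro exI ballI)
    fix i assume "i \<in> {1..n}"
    then have i': "i - 1 < n" "Suc (i - 1) = i"
      by auto
    then have "(M *\<^sub>v x) $ (i - 1) = b i"
      using \<open>M *\<^sub>v x = y\<close> by (simp add: y_def)
    with i' show "(\<Sum>j\<in>{1..n}. A i j * x $ (j - 1)) = b i"
      using mult_vec[of "i - 1" x] x by simp
  qed
qed

lemma ex1_supported_solution_if_kernel_trivial:
  fixes A :: "nat \<Rightarrow> nat \<Rightarrow> real" and b :: "nat \<Rightarrow> real"
  assumes kernel: "\<And>v. \<forall>i\<in>{1..n}. (\<Sum>j\<in>{1..n}. A i j * v j) = 0 \<Longrightarrow> \<forall>j\<in>{1..n}. v j = 0"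
  shows "\<exists>!v. (\<forall>i\<in>{1..n}. (\<Sum>j\<in>{1..n}. A i j * v j) = b i) \<and> (\<forall>j. j \<notin> {1..n} \<longrightarrow> v j = 0)"
proof -
  obtain v where v: "\<forall>i\<in>{1..n}. (\<Sum>j\<in>{1..n}. A i j * v j) = b i"
    using solvable_if_kernel_trivial[OF kernel] by blast
  let ?v = "\<lambda>j. if j \<in> {1..n} then v j else 0"
  show ?thesis
  proof (rule ex1I[of _ ?v])
    show "(\<forall>i\<in>{1..n}. (\<Sum>j\<in>{1..n}. A i j * ?v j) = b i) \<and> (\<forall>j. j \<notin> {1..n} \<longrightarrow> ?v j = 0)"
      using v by simp
  next
    fix v' assume v': "(\<forall>i\<in>{1..n}. (\<Sum>j\<in>{1..n}. A i j * v' j) = b i) \<and> (\<forall>j. j \<notin> {1..n} \<longrightarrow> v' j = 0)"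
    have "\<forall>i\<in>{1..n}. (\<Sum>j\<in>{1..n}. A i j * (v' j - v j)) = 0"
      using v v' by (simp add: right_diff_distrib sum_subtractf)
    then have "\<forall>j\<in>{1..n}. v' j - v j = 0"
      by (rule kernel)
    with v' show "v' = ?v"
      by auto
  qed
qed

definition phi_slope :: "nat \<Rightarrow> (nat \<Rightarrow> real) \<Rightarrow> nat \<Rightarrow> real" where
  "phi_slope I rho k = 1 - (\<Sum>j\<in>{1..I}. kappa k j * rho j)"

lemma Mmat_row_sum:
  assumes i: "i \<in> {1..I}"
  shows "(\<Sum>j\<in>{1..I}. Mmat I rho i j * v j) =
    phi_slope I rho i * v i + (\<Sum>j\<in>{1..I}. kappa i j * rho j * v j)"
proof -
  have "(\<Sum>j\<in>{1..I}. Mmat I rho i j * v j) =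
      Mmat I rho i i * v i + (\<Sum>j\<in>{1..I} - {i}. Mmat I rho i j * v j)"
    using sum.remove[OF _ i] by blast
  also have "(\<Sum>j\<in>{1..I} - {i}. Mmat I rho i j * v j) = (\<Sum>j\<in>{1..I} - {i}. kappa i j * rho j * v j)"
    by (rule sum.cong) (auto simp: Mmat_def)
  finally have "(\<Sum>j\<in>{1..I}. Mmat I rho i j * v j) =
      Mmat I rho i i * v i + (\<Sum>j\<in>{1..I} - {i}. kappa i j * rho j * v j)" .
  moreover have "(\<Sum>j\<in>{1..I}. kappa i j * rho j) = kappa i i * rho i + (\<Sum>j\<in>{1..I} - {i}. kappa i j * rho j)"
    and "(\<Sum>j\<in>{1..I}. kappa i j * rho j * v j) = kappa i i * rho i * v i + (\<Sum>j\<in>{1..I} - {i}. kappa i j * rho j * v j)"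
    using sum.remove[OF _ i] by blast+
  ultimately show ?thesis
    by (simp add: Mmat_def phi_slope_def algebra_simps)
qed

lemma Mstar_mult_rho: "Mstar I rho i j * rho j = rho i * Mmat I rho i j"
  unfolding Mstar_def Mmat_def by auto

lemma phi_slope_last_le:
  assumes nonneg: "\<forall>j\<in>{1..I}. 0 \<le> rho j" and k: "k \<in> {1..I}"
  shows "phi_slope I rho I \<le> phi_slope I rho k"
proof -
  have "(\<Sum>j\<in>{1..I}. kappa k j * rho j) \<le> (\<Sum>j\<in>{1..I}. kappa I j * rho j)"
    using nonneg k by (intro sum_mono mult_right_mono) (auto simp: kappa_def)
  then show ?thesis
    unfolding phi_slope_def by simp
qed

lemma phi_slope_eq_last:
  assumes j: "j \<in> {1..I}" and vanish: "\<forall>l\<in>{1..I}. j < l \<longrightarrow> rho l = 0"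
  shows "phi_slope I rho j = phi_slope I rho I"
  unfolding phi_slope_def
proof (intro arg_cong[where f = "\<lambda>x. 1 - x"] sum.cong refl)
  fix l assume "l \<in> {1..I}"
  then show "kappa j l * rho l = kappa I l * rho l"
    using j vanish by (cases "j < l") (auto simp: kappa_def min_def)
qed

lemma phi_slope_pos:
  assumes nonneg: "\<forall>j\<in>{1..I}. 0 \<le> rho j"
    and slope: "\<forall>j\<in>{1..I}. 0 \<le> phi_slope I rho j \<and> (phi_slope I rho j = 0 \<longrightarrow> rho j = 0)"
    and k: "k \<in> {1..I}"
  shows "0 < phi_slope I rho k"
proof -
  have "0 < phi_slope I rho I"
  proof (cases "\<exists>l\<in>{1..I}. rho l \<noteq> 0")
    case False
    then show ?thesis
      by (simp add: phi_slope_def)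
  next
    case True
    define S where "S = {l\<in>{1..I}. rho l \<noteq> 0}"
    have "finite S" "S \<noteq> {}"
      using True by (auto simp: S_def)
    then have j: "Max S \<in> {1..I}" "rho (Max S) \<noteq> 0"
      using Max_in[of S] by (auto simp: S_def)
    have "l \<le> Max S" if "l \<in> {1..I}" "rho l \<noteq> 0" for l
      using Max_ge[OF \<open>finite S\<close>] that by (simp add: S_def)
    then have "\<forall>l\<in>{1..I}. Max S < l \<longrightarrow> rho l = 0"
      using not_le by blast
    then have "phi_slope I rho I = phi_slope I rho (Max S)"
      using phi_slope_eq_last[OF j(1)] by simp
    then show ?thesis
      using slope j by force
  qed
  then show ?thesis
    using phi_slope_last_le[OF nonneg k] by linarith
qed

lemma eq_zero_if_abs_bounded_by_total:
  fixes w a :: "'i \<Rightarrow> real"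
  assumes "finite A" and small: "(\<Sum>i\<in>A. a i) < 1"
    and bound: "\<And>i. i \<in> A \<Longrightarrow> \<bar>w i\<bar> \<le> a i * (\<Sum>j\<in>A. \<bar>w j\<bar>)"
  shows "\<forall>i\<in>A. w i = 0"
proof -
  define W where "W = (\<Sum>j\<in>A. \<bar>w j\<bar>)"
  have "W \<le> (\<Sum>i\<in>A. a i * W)"
    unfolding W_def by (rule sum_mono) (rule bound)
  also have "\<dots> = (\<Sum>i\<in>A. a i) * W"
    by (simp add: sum_distrib_right)
  finally have "W * (1 - (\<Sum>i\<in>A. a i)) \<le> 0"
    by (simp add: algebra_simps)
  moreover have "0 \<le> W"
    by (simp add: W_def sum_nonneg)
  ultimately have "W = 0"
    using small by (simp add: mult_le_0_iff)
  then show ?thesis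
    using \<open>finite A\<close> by (simp add: W_def sum_nonneg_eq_0_iff)
qed

lemma Mmat_kernel_trivial:
  assumes nonneg: "\<forall>j\<in>{1..I}. 0 \<le> rho j"
    and pos: "\<forall>j\<in>{1..I}. 0 < phi_slope I rho j"
    and small: "(\<Sum>j\<in>{1..I}. real j * (rho j / phi_slope I rho j)) < 1/2"
    and kernel: "\<forall>i\<in>{1..I}. (\<Sum>j\<in>{1..I}. Mmat I rho i j * v j) = 0"
  shows "\<forall>j\<in>{1..I}. v j = 0"
proof -
  define r where "r j = rho j / phi_slope I rho j" for j
  define w where "w j = rho j * v j" for j
  have row: "phi_slope I rho i * v i = - (\<Sum>j\<in>{1..I}. kappa i j * w j)" if "i \<in> {1..I}" for i
    using kernel that Mmat_row_sum[OF that, of rho v] by (simp add: w_def mult.assoc)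
  have r_nonneg: "0 \<le> r i" if "i \<in> {1..I}" for i
    using nonneg pos that by (auto simp: r_def intro!: divide_nonneg_pos)
  have w_bound: "\<bar>w i\<bar> \<le> 2 * real i * r i * (\<Sum>j\<in>{1..I}. \<bar>w j\<bar>)" if i: "i \<in> {1..I}" for i
  proof -
    have "phi_slope I rho i \<noteq> 0"
      using pos i by fastforce
    then have "w i = r i * (phi_slope I rho i * v i)"
      by (simp add: w_def r_def)
    then have "\<bar>w i\<bar> = r i * \<bar>\<Sum>j\<in>{1..I}. kappa i j * w j\<bar>"
      using row[OF i] r_nonneg[OF i] by (simp add: abs_mult)
    moreover have "\<bar>\<Sum>j\<in>{1..I}. kappa i j * w j\<bar> \<le> 2 * real i * (\<Sum>j\<in>{1..I}. \<bar>w j\<bar>)"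
      unfolding sum_distrib_left by (rule order_trans[OF sum_abs sum_mono])
        (auto simp: abs_mult kappa_def intro!: mult_right_mono)
    ultimately have "\<bar>w i\<bar> \<le> r i * (2 * real i * (\<Sum>j\<in>{1..I}. \<bar>w j\<bar>))"
      using r_nonneg[OF i] by (simp add: mult_left_mono)
    then show ?thesis
      by (simp add: mult_ac)
  qed
  have "(\<Sum>i\<in>{1..I}. 2 * real i * r i) = 2 * (\<Sum>i\<in>{1..I}. real i * r i)"
    by (simp add: sum_distrib_left mult.assoc)
  then have "(\<Sum>i\<in>{1..I}. 2 * real i * r i) < 1"
    using small[folded r_def] by simp
  with w_bound have "\<forall>j\<in>{1..I}. w j = 0"
    by (intro eq_zero_if_abs_bounded_by_total) auto
  then have "\<forall>i\<in>{1..I}. phi_slope I rho i * v i = 0"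
    using row by simp
  then show ?thesis
    using pos by fastforce
qed

lemma Mstar_veff_identity:
  assumes nonneg: "\<forall>j\<in>{1..I}. 0 \<le> rho j"
    and pos: "\<forall>j\<in>{1..I}. 0 < phi_slope I rho j"
    and small: "(\<Sum>j\<in>{1..I}. real j * (rho j / phi_slope I rho j)) < 1/2"
    and i: "i \<in> {1..I}"
  shows "real i * rho i = (\<Sum>j\<in>{1..I}. Mstar I rho i j * veff I rho j * rho j)"
proof -
  have "\<exists>!v. (\<forall>i\<in>{1..I}. (\<Sum>j\<in>{1..I}. Mmat I rho i j * v j) = real i) \<and> (\<forall>j. j \<notin> {1..I} \<longrightarrow> v j = 0)"
    using Mmat_kernel_trivial[OF nonneg pos small]
    by (intro ex1_supported_solution_if_kernel_trivial) blast
  from theI'[OF this] have "\<forall>i\<in>{1..I}. (\<Sum>j\<in>{1..I}. Mmat I rho i j * veff I rho j) = real i"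
    unfolding veff_def by (rule conjunct1)
  then have "(\<Sum>j\<in>{1..I}. Mmat I rho i j * veff I rho j) = real i"
    using i by blast
  have Mstar_term: "Mstar I rho i j * veff I rho j * rho j = rho i * (Mmat I rho i j * veff I rho j)" for j
    by (metis Mstar_mult_rho mult.assoc mult.commute)
  have "(\<Sum>j\<in>{1..I}. Mstar I rho i j * veff I rho j * rho j) =
      rho i * (\<Sum>j\<in>{1..I}. Mmat I rho i j * veff I rho j)"
    unfolding sum_distrib_left by (rule sum.cong[OF refl], rule Mstar_term)
  with \<open>(\<Sum>j\<in>{1..I}. Mmat I rho i j * veff I rho j) = real i\<close> show ?thesis
    by simp
qed

lemma classC1_right_quotient_tendsto:
  assumes f: "classC1 f" and u: "0 \<le> u"
  shows "((\<lambda>a. (f a - f u) / (a - u)) \<longlongrightarrow> deriv (extR f) u) (at_right u)"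
proof -
  obtain g where g: "\<And>x. (extR f has_real_derivative g x) (at x)"
    using f unfolding classC1_def by blast
  have "((\<lambda>a. (extR f a - extR f u) / (a - u)) \<longlongrightarrow> deriv (extR f) u) (at u)"
    using g[of u] unfolding DERIV_imp_deriv[OF g] has_field_derivative_iff .
  then have "((\<lambda>a. (extR f a - extR f u) / (a - u)) \<longlongrightarrow> deriv (extR f) u) (at_right u)"
    by (rule filterlim_mono) (simp_all add: at_le)
  moreover have "\<forall>\<^sub>F a in at_right u. (extR f a - extR f u) / (a - u) = (f a - f u) / (a - u)"
    using eventually_at_right_less[of u] by eventually_elim (use u in \<open>simp add: extR_def\<close>)
  ultimately show ?thesis
    by (simp add: tendsto_cong)
qed

lemma classC1_deriv_nonneg:
  assumes f: "classC1 f" and u: "0 \<le> u"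
  shows "0 \<le> deriv (extR f) u"
proof (rule tendsto_lowerbound[OF classC1_right_quotient_tendsto[OF f u]])
  have "mono_on {0..} f"
    using f by (simp add: classC1_def classC_def)
  with u show "\<forall>\<^sub>F a in at_right u. 0 \<le> (f a - f u) / (a - u)"
    by (intro eventually_at_rightI[of u "u + 1"]) (auto simp: mono_on_def)
qed simp

lemma classD1_dpsi_nonneg:
  "psi \<in> classD1 I \<Longrightarrow> j \<in> {1..I} \<Longrightarrow> 0 \<le> u \<Longrightarrow> 0 \<le> dpsi psi j u"
  unfolding classD1_def dpsi_def by (simp add: classC1_deriv_nonneg)

lemma phi_diff:
  "phi I psi k a - phi I psi k b = (a - b) - (\<Sum>j\<in>{1..I}. kappa k j * (psi j a - psi j b))"
  unfolding phi_def by (simp add: sum_subtractf right_diff_distrib)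

lemma phi_diff_eq_last:
  "phi I psi k a - phi I psi k b = (phi I psi I a - phi I psi I b) +
     (\<Sum>j\<in>{1..I}. (kappa I j - kappa k j) * (psi j a - psi j b))"
  unfolding phi_diff by (simp add: sum_subtractf left_diff_distrib)

lemma classD_phi_strict_mono:
  assumes psi: "psi \<in> classD I" and k: "k \<in> {1..I}" and "0 \<le> b" "b < a"
  shows "phi I psi k b < phi I psi k a"
proof -
  have "phi I psi I b < phi I psi I a"
    using psi \<open>0 \<le> b\<close> \<open>b < a\<close> by (auto simp: classD_def classCup_def strict_mono_on_def)
  moreover have "psi j b \<le> psi j a" if "j \<in> {1..I}" for j
    using psi that \<open>0 \<le> b\<close> \<open>b < a\<close> by (auto simp: classD_def classC_def mono_on_def)
  then have "0 \<le> (\<Sum>j\<in>{1..I}. (kappa I j - kappa k j) * (psi j a - psi j b))"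
    using k by (intro sum_nonneg mult_nonneg_nonneg) (auto simp: kappa_def)
  ultimately show ?thesis
    using phi_diff_eq_last[of I psi k a b] by linarith
qed

lemma classD_phi_quotient_pos:
  assumes "psi \<in> classD I" "k \<in> {1..I}" "0 \<le> u"
  shows "\<forall>\<^sub>F a in at_right u. 0 < (phi I psi k a - phi I psi k u) / (a - u)"
  using eventually_at_right_less[of u]
  by eventually_elim (use classD_phi_strict_mono[OF assms] in simp)

lemma classD1_phi_quotient_tendsto:
  assumes psi: "psi \<in> classD1 I" and u: "0 \<le> u"
  shows "((\<lambda>a. (phi I psi k a - phi I psi k u) / (a - u)) \<longlongrightarrow> phi_slope I (\<lambda>j. dpsi psi j u) k)
    (at_right u)"
proof -
  have "((\<lambda>a. 1 - (\<Sum>j\<in>{1..I}. kappa k j * ((psi j a - psi j u) / (a - u))))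
      \<longlongrightarrow> phi_slope I (\<lambda>j. dpsi psi j u) k) (at_right u)"
    using psi u unfolding phi_slope_def dpsi_def classD1_def
    by (intro tendsto_intros classC1_right_quotient_tendsto) auto
  moreover have "\<forall>\<^sub>F a in at_right u. 1 - (\<Sum>j\<in>{1..I}. kappa k j * ((psi j a - psi j u) / (a - u)))
      = (phi I psi k a - phi I psi k u) / (a - u)"
    using eventually_at_right_less[of u]
  proof eventually_elim
    case (elim a)
    have "(\<Sum>j\<in>{1..I}. kappa k j * ((psi j a - psi j u) / (a - u))) =
        (\<Sum>j\<in>{1..I}. kappa k j * (psi j a - psi j u)) / (a - u)"
      by (simp add: sum_divide_distrib)
    then show ?case
      unfolding phi_diff using elim by (simp add: diff_divide_distrib)
  qed
  ultimately show ?thesis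
    by (simp add: tendsto_cong)
qed

definition rel_lip_const :: "nat \<Rightarrow> (nat \<Rightarrow> real \<Rightarrow> real) \<Rightarrow> nat \<Rightarrow> ereal" where
  "rel_lip_const I psi i = (SUP p\<in>{(a,b). a \<ge> (0::real) \<and> b \<ge> 0 \<and> a \<noteq> b}.
     ereal ((psi i (fst p) - psi i (snd p)) / (phi I psi i (fst p) - phi I psi i (snd p))))"

lemma rel_lip_const_upper:
  assumes "0 \<le> a" "0 \<le> b" "a \<noteq> b"
  shows "ereal ((psi k a - psi k b) / (phi I psi k a - phi I psi k b)) \<le> rel_lip_const I psi k"
  unfolding rel_lip_const_def by (rule SUP_upper2[of "(a, b)"]) (use assms in auto)

lemma classD_rel_lip_const_sum_less:
  "psi \<in> classD I \<Longrightarrow> (\<Sum>i\<in>{1..I}. ereal (real i) * rel_lip_const I psi i) < ereal (1/2)"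
  unfolding classD_def rel_lip_const_def by simp

lemma classD_rel_lip_const_nonneg:
  assumes psi: "psi \<in> classD I" and k: "k \<in> {1..I}"
  shows "0 \<le> rel_lip_const I psi k"
proof -
  have "psi k 0 \<le> psi k 1"
    using psi k by (auto simp: classD_def classC_def mono_on_def)
  moreover have "phi I psi k 0 < phi I psi k 1"
    using classD_phi_strict_mono[OF psi k] by simp
  ultimately have "0 \<le> ereal ((psi k 1 - psi k 0) / (phi I psi k 1 - phi I psi k 0))"
    by simp
  also have "\<dots> \<le> rel_lip_const I psi k"
    by (rule rel_lip_const_upper) simp_all
  finally show ?thesis .
qed

lemma classD_rel_lip_const_finite:
  assumes psi: "psi \<in> classD I" and k: "k \<in> {1..I}"
  shows "rel_lip_const I psi k < \<infinity>"
proof (rule ccontr)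
  assume "\<not> rel_lip_const I psi k < \<infinity>"
  then have "ereal (real k) * rel_lip_const I psi k = \<infinity>"
    using k by simp
  moreover have "(\<Sum>i\<in>{k}. ereal (real i) * rel_lip_const I psi i)
      \<le> (\<Sum>i\<in>{1..I}. ereal (real i) * rel_lip_const I psi i)"
    using k classD_rel_lip_const_nonneg[OF psi] by (intro sum_mono2) (auto simp: ereal_zero_le_0_iff)
  ultimately show False
    using classD_rel_lip_const_sum_less[OF psi] by simp
qed

lemma rel_lip_const_ge_quotient_ratio:
  assumes "0 \<le> u"
  shows "\<forall>\<^sub>F a in at_right u.
    ereal (((psi k a - psi k u) / (a - u)) / ((phi I psi k a - phi I psi k u) / (a - u)))
      \<le> rel_lip_const I psi k"
  using eventually_at_right_less[of u]
proof eventually_elim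
  case (elim a)
  then have "((psi k a - psi k u) / (a - u)) / ((phi I psi k a - phi I psi k u) / (a - u)) =
      (psi k a - psi k u) / (phi I psi k a - phi I psi k u)"
    by simp
  then show ?case
    using rel_lip_const_upper[of a u psi k I] elim assms by simp
qed

lemma classD1_slope_ratio_le_rel_lip_const:
  assumes psi: "psi \<in> classD1 I" and k: "k \<in> {1..I}" and u: "0 \<le> u"
    and pos: "0 < phi_slope I (\<lambda>j. dpsi psi j u) k"
  shows "ereal (dpsi psi k u / phi_slope I (\<lambda>j. dpsi psi j u) k) \<le> rel_lip_const I psi k"
proof (rule tendsto_upperbound[OF _ rel_lip_const_ge_quotient_ratio[OF u]])
  have "classC1 (psi k)"
    using psi k by (simp add: classD1_def)
  then show "((\<lambda>a. ereal (((psi k a - psi k u) / (a - u)) /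
        ((phi I psi k a - phi I psi k u) / (a - u)))) \<longlongrightarrow> ereal (dpsi psi k u / phi_slope I (\<lambda>j. dpsi psi j u) k)) (at_right u)"
    using pos unfolding dpsi_def
    by (intro tendsto_ereal tendsto_divide classC1_right_quotient_tendsto
        classD1_phi_quotient_tendsto[OF psi u, unfolded dpsi_def]) (auto simp: u)
qed simp

lemma classD1_dpsi_eq_0_if_phi_slope_eq_0:
  assumes psi: "psi \<in> classD1 I" and k: "k \<in> {1..I}" and u: "0 \<le> u"
    and slope: "phi_slope I (\<lambda>j. dpsi psi j u) k = 0"
  shows "dpsi psi k u = 0"
proof (rule ccontr)
  assume "dpsi psi k u \<noteq> 0"
  then have "0 < dpsi psi k u"
    using classD1_dpsi_nonneg[OF psi k u] by simp
  have C1: "classC1 (psi k)" and D: "psi \<in> classD I"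
    using psi k by (auto simp: classD1_def)
  note psi_quotient = classC1_right_quotient_tendsto[OF C1 u, folded dpsi_def]
  obtain L where L: "rel_lip_const I psi k = ereal L"
    using classD_rel_lip_const_finite[OF D k] classD_rel_lip_const_nonneg[OF D k]
    by (cases "rel_lip_const I psi k") auto
  have "LIM a at_right u.
      ((psi k a - psi k u) / (a - u)) / ((phi I psi k a - phi I psi k u) / (a - u)) :> at_top"
    using psi_quotient classD1_phi_quotient_tendsto[OF psi u, of k]
      classD_phi_quotient_pos[OF D k u] \<open>0 < dpsi psi k u\<close>
    by (intro LIM_at_top_divide) (simp_all add: slope)
  then have "\<forall>\<^sub>F a in at_right u.
      L + 1 \<le> ((psi k a - psi k u) / (a - u)) / ((phi I psi k a - phi I psi k u) / (a - u))"
    by (simp add: filterlim_at_top)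
  then have "\<forall>\<^sub>F a in at_right u. False"
    using rel_lip_const_ge_quotient_ratio[OF u, of psi k I] unfolding L
    by eventually_elim simp
  then show False
    by simp
qed

lemma classD1_phi_slope_pos:
  assumes psi: "psi \<in> classD1 I" and u: "0 \<le> u" and k: "k \<in> {1..I}"
  shows "0 < phi_slope I (\<lambda>j. dpsi psi j u) k"
proof (rule phi_slope_pos[OF _ _ k])
  show "\<forall>j\<in>{1..I}. 0 \<le> dpsi psi j u"
    using classD1_dpsi_nonneg[OF psi _ u] by blast
  have "0 \<le> phi_slope I (\<lambda>j. dpsi psi j u) j" if "j \<in> {1..I}" for j
  proof (rule tendsto_lowerbound[OF classD1_phi_quotient_tendsto[OF psi u]])
    have "psi \<in> classD I"
      using psi by (simp add: classD1_def)
    from classD_phi_quotient_pos[OF this that u]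
    show "\<forall>\<^sub>F a in at_right u. 0 \<le> (phi I psi j a - phi I psi j u) / (a - u)"
      by (rule eventually_mono) simp
  qed simp
  then show "\<forall>j\<in>{1..I}. 0 \<le> phi_slope I (\<lambda>j. dpsi psi j u) j \<and>
      (phi_slope I (\<lambda>j. dpsi psi j u) j = 0 \<longrightarrow> dpsi psi j u = 0)"
    using classD1_dpsi_eq_0_if_phi_slope_eq_0[OF psi _ u] by blast
qed

lemma classD1_slope_ratio_sum_less:
  assumes psi: "psi \<in> classD1 I" and u: "0 \<le> u"
  shows "(\<Sum>j\<in>{1..I}. real j * (dpsi psi j u / phi_slope I (\<lambda>j. dpsi psi j u) j)) < 1/2"
proof -
  have "(\<Sum>j\<in>{1..I}. ereal (real j) * ereal (dpsi psi j u / phi_slope I (\<lambda>j. dpsi psi j u) j))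
      \<le> (\<Sum>j\<in>{1..I}. ereal (real j) * rel_lip_const I psi j)"
    using classD1_slope_ratio_le_rel_lip_const[OF psi _ u] classD1_phi_slope_pos[OF psi u]
    by (intro sum_mono ereal_mult_left_mono) auto
  also have "\<dots> < ereal (1/2)"
    using psi by (intro classD_rel_lip_const_sum_less) (simp add: classD1_def)
  finally show ?thesis
    by simp
qed

theorem lemma6p7:
  fixes I :: nat and psi :: "nat \<Rightarrow> real \<Rightarrow> real" and i :: nat and u :: real
  assumes "psi \<in> classD1 I" and "i \<in> {1..I}" and "u \<ge> 0"
  shows "real i * dpsi psi i u =
    (\<Sum>j\<in>{1..I}. Mstar I (\<lambda>k. dpsi psi k u) i j * veff I (\<lambda>k. dpsi psi k u) j * dpsi psi j u)"
proof (rule Mstar_veff_identity[OF _ _ _ assms(2)])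
  show "\<forall>j\<in>{1..I}. 0 \<le> dpsi psi j u"
    using classD1_dpsi_nonneg[OF assms(1) _ assms(3)] by blast
  show "\<forall>j\<in>{1..I}. 0 < phi_slope I (\<lambda>k. dpsi psi k u) j"
    using classD1_phi_slope_pos[OF assms(1,3)] by blast
  show "(\<Sum>j\<in>{1..I}. real j * (dpsi psi j u / phi_slope I (\<lambda>k. dpsi psi k u) j)) < 1/2"
    by (rule classD1_slope_ratio_sum_less[OF assms(1,3)])
qed

end
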